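(* Let $k_0\in\mathbb{R}$, let $w\in C^2(\mathbb{R})$ be real-valued with $\lim_{x\to\pm\infty}w(x)=\mp k_0$ and $\lim_{x\to\pm\infty}w'(x)=0$, and $U=-w^2-iw'+k_0^2$. Let $k_\star\in\mathbb{R}\setminus\{0,\pm k_0\}$ and $\rho_\star>0$. Suppose $\psi_{\rm las}$ and $\psi_{\rm CPA}$ are solutions of $-\psi''+U\psi=k_\star^2\psi$ such that, together with their first derivatives, $$\psi_{\rm las}(x)\sim a_\pm e^{\pm ik_\star x},\qquad \psi_{\rm CPA}(x)\sim c_\pm e^{\mp ik_\star x}\qquad (x\to\pm\infty),$$ with $|a_+|=|a_-|=|c_+|=|c_-|=\rho_\star$. Then for all $x\in\mathbb{R}$, $$|\psi_{\rm CPA}(x)|^2+|\psi_{\rm las}(x)|^2+\frac{k_0}{k_\star}\big(|\psi_{\rm las}(x)|^2-|\psi_{\rm CPA}(x)|^2\big)=2\rho_\star^2.$$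
   Context: "$f(x)\sim a e^{i\kappa x}$ together with the first derivative" means $f(x)-ae^{i\kappa x}\to0$ and $f'(x)-i\kappa a e^{i\kappa x}\to0$. Such $\psi_{\rm las},\psi_{\rm CPA}$ are the laser (outgoing) and coherent-perfect-absorber (incoming) solutions at a self-dual spectral singularity $k_\star$. *)

theory Defs
  imports "HOL-Analysis.Analysis"
begin

definition C2_real :: "(real \<Rightarrow> real) \<Rightarrow> (real \<Rightarrow> real) \<Rightarrow> (real \<Rightarrow> real) \<Rightarrow> bool" where
  "C2_real w w1 w2 \<longleftrightarrow>
     (\<forall>x. (w has_real_derivative w1 x) (at x)) \<and>
     (\<forall>x. (w1 has_real_derivative w2 x) (at x)) \<and> continuous_on UNIV w2"

definition potU :: "(real \<Rightarrow> real) \<Rightarrow> (real \<Rightarrow> real) \<Rightarrow> real \<Rightarrow> real \<Rightarrow> complex" where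
  "potU w w1 k0 x = - complex_of_real ((w x)\<^sup>2) - \<i> * complex_of_real (w1 x) + complex_of_real (k0\<^sup>2)"

definition solves_schr :: "(real \<Rightarrow> complex) \<Rightarrow> real \<Rightarrow> (real \<Rightarrow> complex) \<Rightarrow> (real \<Rightarrow> complex)
    \<Rightarrow> (real \<Rightarrow> complex) \<Rightarrow> bool" where
  "solves_schr U k psi psi1 psi2 \<longleftrightarrow>
     (\<forall>x. (psi has_vector_derivative psi1 x) (at x)) \<and>
     (\<forall>x. (psi1 has_vector_derivative psi2 x) (at x)) \<and>
     (\<forall>x. - psi2 x + U x * psi x = complex_of_real (k\<^sup>2) * psi x)"

definition asymp_exp :: "(real \<Rightarrow> complex) \<Rightarrow> (real \<Rightarrow> complex) \<Rightarrow> complex \<Rightarrow> real \<Rightarrow> real filter \<Rightarrow> bool" where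
  "asymp_exp f f1 a \<kappa> F \<longleftrightarrow>
     ((\<lambda>x. f x - a * exp (\<i> * complex_of_real (\<kappa> * x))) \<longlongrightarrow> 0) F \<and>
     ((\<lambda>x. f1 x - \<i> * complex_of_real \<kappa> * a * exp (\<i> * complex_of_real (\<kappa> * x))) \<longlongrightarrow> 0) F"

end

theory Submission imports Defs begin

text \<open>The operator factorises as -d^2/dx^2 + U = k0^2 - (d/dx - i w)(d/dx + i w). Hence for
  solutions at energy k^2 the dressed derivative D f = f' + i w f satisfies
  (D f)' = i w D f - (k^2 - k0^2) f, and the sesquilinear form
  (k^2 - k0^2) f cnj g + D f cnj (D g) is independent of x. Evaluated at +\<infinity> it gives
  (k^2 - k0^2) |psi|^2 + |D psi|^2 = 2 k (k -+ k0) rho^2 for the laser and the CPA solution, while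
  the mixed form vanishes, so (k^2 - k0^2)^2 |psi_CPA|^2 |psi_las|^2 = |D psi_CPA|^2 |D psi_las|^2.
  Eliminating |D psi|^2 from these three identities leaves the claimed linear relation.\<close>

definition dressed_deriv :: "(real \<Rightarrow> real) \<Rightarrow> (real \<Rightarrow> complex) \<Rightarrow> (real \<Rightarrow> complex) \<Rightarrow> real \<Rightarrow> complex" where
  "dressed_deriv w f f1 x = f1 x + \<i> * of_real (w x) * f x"

definition conserved_form :: "real \<Rightarrow> (real \<Rightarrow> real) \<Rightarrow> (real \<Rightarrow> complex) \<Rightarrow> (real \<Rightarrow> complex)
    \<Rightarrow> (real \<Rightarrow> complex) \<Rightarrow> (real \<Rightarrow> complex) \<Rightarrow> real \<Rightarrow> complex" where
  "conserved_form \<kappa> w f f1 g g1 x =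
     of_real \<kappa> * f x * cnj (g x) + dressed_deriv w f f1 x * cnj (dressed_deriv w g g1 x)"

lemma dressed_deriv_has_vector_derivative:
  assumes w: "(w has_real_derivative w1 x) (at x)"
    and f: "solves_schr (potU w w1 k0) k f f1 f2"
  shows "(dressed_deriv w f f1 has_vector_derivative
           \<i> * of_real (w x) * dressed_deriv w f f1 x - of_real (k\<^sup>2 - k0\<^sup>2) * f x) (at x)"
proof -
  from f have f1: "(f has_vector_derivative f1 x) (at x)"
    and f2: "(f1 has_vector_derivative f2 x) (at x)"
    and eq: "f2 x = potU w w1 k0 x * f x - of_real (k\<^sup>2) * f x"
    by (auto simp: solves_schr_def algebra_simps)
  have w': "((\<lambda>x. complex_of_real (w x)) has_vector_derivative of_real (w1 x)) (at x)"
    using has_vector_derivative_of_real[OF w] .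
  show ?thesis
    unfolding dressed_deriv_def[abs_def]
    by (rule derivative_eq_intros f1 f2 w' refl)+
      (simp add: eq potU_def algebra_simps power2_eq_square)
qed

lemma conserved_form_has_vector_derivative_0:
  assumes w: "\<And>x. (w has_real_derivative w1 x) (at x)"
    and f: "solves_schr (potU w w1 k0) k f f1 f2"
    and g: "solves_schr (potU w w1 k0) k g g1 g2"
  shows "(conserved_form (k\<^sup>2 - k0\<^sup>2) w f f1 g g1 has_vector_derivative 0) (at x)"
proof -
  from f g have f1: "(f has_vector_derivative f1 x) (at x)"
    and g1: "(g has_vector_derivative g1 x) (at x)"
    by (auto simp: solves_schr_def)
  note Df = dressed_deriv_has_vector_derivative[OF w f]
    and Dg = dressed_deriv_has_vector_derivative[OF w g]
  show ?thesis
    unfolding conserved_form_def[abs_def]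
    by (rule derivative_eq_intros f1 g1 Df Dg refl)+
      (simp add: dressed_deriv_def algebra_simps)
qed

lemma conserved_form_constant:
  assumes "\<And>x. (w has_real_derivative w1 x) (at x)"
    and "solves_schr (potU w w1 k0) k f f1 f2" "solves_schr (potU w w1 k0) k g g1 g2"
  shows "conserved_form (k\<^sup>2 - k0\<^sup>2) w f f1 g g1 x = conserved_form (k\<^sup>2 - k0\<^sup>2) w f f1 g g1 y"
  using has_vector_derivative_zero_constant[of UNIV "conserved_form (k\<^sup>2 - k0\<^sup>2) w f f1 g g1"]
    conserved_form_has_vector_derivative_0[OF assms] by (metis UNIV_I convex_UNIV)

lemma conserved_form_diag:
  "conserved_form \<kappa> w f f1 f f1 x = of_real (\<kappa> * (norm (f x))\<^sup>2 + (norm (dressed_deriv w f f1 x))\<^sup>2)"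
  unfolding conserved_form_def of_real_add of_real_mult complex_norm_square by (simp add: mult.assoc)

lemma tendsto_divide_unimodular:
  fixes h u :: "'a \<Rightarrow> complex"
  assumes "((\<lambda>x. h x - c * u x) \<longlongrightarrow> 0) F" and "\<And>x. norm (u x) = 1"
  shows "((\<lambda>x. h x / u x) \<longlongrightarrow> c) F"
proof -
  have "norm (h x / u x - c) = norm (h x - c * u x)" for x
  proof -
    have "u x \<noteq> 0" using assms(2)[of x] by auto
    then have "h x / u x - c = (h x - c * u x) / u x" by (simp add: field_simps)
    then show ?thesis by (simp add: norm_divide assms(2))
  qed
  then show ?thesis
    using assms(1) by (simp add: tendsto_iff dist_norm)
qed

lemma asymp_exp_dephased:
  assumes "asymp_exp f f1 a \<mu> F"
  shows "((\<lambda>x. f x / exp (\<i> * of_real (\<mu> * x))) \<longlongrightarrow> a) F"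
    and "((\<lambda>x. f1 x / exp (\<i> * of_real (\<mu> * x))) \<longlongrightarrow> \<i> * of_real \<mu> * a) F"
  using assms unfolding asymp_exp_def
  by (auto intro!: tendsto_divide_unimodular simp: mult.assoc)

lemma tendsto_conserved_form_dephased:
  assumes f: "asymp_exp f f1 a \<mu> F" and g: "asymp_exp g g1 b \<nu> F"
    and w: "(w \<longlongrightarrow> l) F"
  shows "((\<lambda>x. conserved_form \<kappa> w f f1 g g1 x
            / (exp (\<i> * of_real (\<mu> * x)) * cnj (exp (\<i> * of_real (\<nu> * x)))))
          \<longlongrightarrow> of_real (\<kappa> + (\<mu> + l) * (\<nu> + l)) * a * cnj b) F"
proof -
  define Ef where "Ef x = exp (\<i> * of_real (\<mu> * x))" for x
  define Eg where "Eg x = exp (\<i> * of_real (\<nu> * x))" for x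
  have "conserved_form \<kappa> w f f1 g g1 x / (Ef x * cnj (Eg x))
      = of_real \<kappa> * (f x / Ef x) * cnj (g x / Eg x)
        + (f1 x / Ef x + \<i> * of_real (w x) * (f x / Ef x))
          * cnj (g1 x / Eg x + \<i> * of_real (w x) * (g x / Eg x))" for x
    by (simp add: conserved_form_def dressed_deriv_def Ef_def Eg_def field_simps)
  moreover have "((\<lambda>x. of_real \<kappa> * (f x / Ef x) * cnj (g x / Eg x)
        + (f1 x / Ef x + \<i> * of_real (w x) * (f x / Ef x))
          * cnj (g1 x / Eg x + \<i> * of_real (w x) * (g x / Eg x)))
      \<longlongrightarrow> of_real \<kappa> * a * cnj b
        + (\<i> * of_real \<mu> * a + \<i> * of_real l * a)
          * cnj (\<i> * of_real \<nu> * b + \<i> * of_real l * b)) F"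
    using asymp_exp_dephased[OF f] asymp_exp_dephased[OF g]
    unfolding Ef_def Eg_def by (intro tendsto_intros w)
  moreover have "of_real \<kappa> * a * cnj b
        + (\<i> * of_real \<mu> * a + \<i> * of_real l * a)
          * cnj (\<i> * of_real \<nu> * b + \<i> * of_real l * b)
      = of_real (\<kappa> + (\<mu> + l) * (\<nu> + l)) * a * cnj b"
    by (simp add: algebra_simps)
  ultimately show ?thesis
    unfolding Ef_def Eg_def by simp
qed

lemma exp_i_times_cnj: "exp (\<i> * of_real t) * cnj (exp (\<i> * of_real t)) = 1"
  by (metis complex_norm_square norm_exp_i_times of_real_1 power_one)

lemma solution_energy_eq_limit:
  assumes w: "\<And>x. (w has_real_derivative w1 x) (at x)"
    and f: "solves_schr (potU w w1 k0) k f f1 f2"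
    and asym: "asymp_exp f f1 a \<mu> F" and lim: "(w \<longlongrightarrow> l) F" and "F \<noteq> bot"
  shows "(k\<^sup>2 - k0\<^sup>2) * (norm (f x))\<^sup>2 + (norm (dressed_deriv w f f1 x))\<^sup>2
           = (k\<^sup>2 - k0\<^sup>2 + (\<mu> + l)\<^sup>2) * (norm a)\<^sup>2"
proof -
  obtain c where c: "\<And>y. conserved_form (k\<^sup>2 - k0\<^sup>2) w f f1 f f1 y = c"
    using conserved_form_constant[OF w f f] by blast
  have "((\<lambda>y. c) \<longlongrightarrow> of_real (k\<^sup>2 - k0\<^sup>2 + (\<mu> + l) * (\<mu> + l)) * a * cnj a) F"
    using tendsto_conserved_form_dephased[OF asym asym lim, of "k\<^sup>2 - k0\<^sup>2"]
    unfolding c exp_i_times_cnj div_by_1 .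
  then have "c = of_real (k\<^sup>2 - k0\<^sup>2 + (\<mu> + l) * (\<mu> + l)) * (a * cnj a)"
    using tendsto_const_iff[OF \<open>F \<noteq> bot\<close>] by (metis mult.assoc)
  also have "a * cnj a = of_real ((norm a)\<^sup>2)"
    by (rule complex_norm_square[symmetric])
  finally have "of_real ((k\<^sup>2 - k0\<^sup>2) * (norm (f x))\<^sup>2 + (norm (dressed_deriv w f f1 x))\<^sup>2)
      = (of_real ((k\<^sup>2 - k0\<^sup>2 + (\<mu> + l) * (\<mu> + l)) * (norm a)\<^sup>2) :: complex)"
    using c[of x] by (simp only: conserved_form_diag of_real_mult)
  then show ?thesis
    by (simp only: of_real_eq_iff power2_eq_square)
qed

lemma solutions_cross_norm_eq:
  assumes w: "\<And>x. (w has_real_derivative w1 x) (at x)"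
    and f: "solves_schr (potU w w1 k0) k f f1 f2" and g: "solves_schr (potU w w1 k0) k g g1 g2"
    and asym_f: "asymp_exp f f1 a \<mu> F" and asym_g: "asymp_exp g g1 b \<nu> F"
    and lim: "(w \<longlongrightarrow> l) F" and "F \<noteq> bot"
    and resonance: "k\<^sup>2 - k0\<^sup>2 + (\<mu> + l) * (\<nu> + l) = 0"
  shows "(k\<^sup>2 - k0\<^sup>2)\<^sup>2 * (norm (f x))\<^sup>2 * (norm (g x))\<^sup>2
           = (norm (dressed_deriv w f f1 x))\<^sup>2 * (norm (dressed_deriv w g g1 x))\<^sup>2"
proof -
  obtain c where c: "\<And>y. conserved_form (k\<^sup>2 - k0\<^sup>2) w f f1 g g1 y = c"
    using conserved_form_constant[OF w f g] by blast
  have "((\<lambda>y. c / (exp (\<i> * of_real (\<mu> * y)) * cnj (exp (\<i> * of_real (\<nu> * y))))) \<longlongrightarrow> 0) F"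
    using tendsto_conserved_form_dephased[OF asym_f asym_g lim, of "k\<^sup>2 - k0\<^sup>2"]
    unfolding c resonance by simp
  from tendsto_norm[OF this] have "((\<lambda>y. norm c) \<longlongrightarrow> 0) F"
    by (simp add: norm_divide norm_mult complex_mod_cnj norm_exp_i_times del: of_real_mult)
  then have "c = 0"
    using tendsto_const_iff[OF \<open>F \<noteq> bot\<close>, of "norm c" 0] by simp
  then have "norm (of_real (k\<^sup>2 - k0\<^sup>2) * f x * cnj (g x))
      = norm (dressed_deriv w f f1 x * cnj (dressed_deriv w g g1 x))"
    using c[of x] unfolding conserved_form_def by (metis add_eq_0_iff norm_minus_cancel)
  then have "\<bar>k\<^sup>2 - k0\<^sup>2\<bar> * norm (f x) * norm (g x)
      = norm (dressed_deriv w f f1 x) * norm (dressed_deriv w g g1 x)"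
    by (simp only: norm_mult complex_mod_cnj norm_of_real)
  then show ?thesis
    by (metis power_mult_distrib power2_abs)
qed

lemma weighted_norm_identity:
  fixes k k0 \<rho> A B C D :: real
  assumes "k \<noteq> 0" "k \<noteq> k0" "k \<noteq> - k0" "\<rho> \<noteq> 0"
    and las: "(k\<^sup>2 - k0\<^sup>2) * A + B = (k\<^sup>2 - k0\<^sup>2 + (k - k0)\<^sup>2) * \<rho>\<^sup>2"
    and cpa: "(k\<^sup>2 - k0\<^sup>2) * C + D = (k\<^sup>2 - k0\<^sup>2 + (k + k0)\<^sup>2) * \<rho>\<^sup>2"
    and cross: "(k\<^sup>2 - k0\<^sup>2)\<^sup>2 * C * A = D * B"
  shows "C + A + (k0 / k) * (A - C) = 2 * \<rho>\<^sup>2"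
proof -
  have B: "B = 2 * k * (k - k0) * \<rho>\<^sup>2 - (k\<^sup>2 - k0\<^sup>2) * A"
    and D: "D = 2 * k * (k + k0) * \<rho>\<^sup>2 - (k\<^sup>2 - k0\<^sup>2) * C"
    using las cpa by (simp_all add: algebra_simps power2_eq_square)
  have "2 * k * \<rho>\<^sup>2 * (k\<^sup>2 - k0\<^sup>2) * ((k + k0) * A + (k - k0) * C - 2 * k * \<rho>\<^sup>2)
      = (k\<^sup>2 - k0\<^sup>2)\<^sup>2 * C * A - D * B"
    unfolding B D by (simp add: algebra_simps power2_eq_square)
  moreover have "k\<^sup>2 - k0\<^sup>2 \<noteq> 0"
    using assms(2,3) by (simp add: power2_eq_iff)
  ultimately have "(k + k0) * A + (k - k0) * C = 2 * k * \<rho>\<^sup>2"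
    using cross assms(1,4) by simp
  then show ?thesis
    using assms(1) by (simp add: field_simps)
qed

theorem mainTheorem7:
  fixes k0 kstar rho :: real
    and w w1 w2 :: "real \<Rightarrow> real"
    and psil psil1 psil2 psic psic1 psic2 :: "real \<Rightarrow> complex"
    and ap am cp cm :: complex
  assumes "C2_real w w1 w2"
    and "(w \<longlongrightarrow> - k0) at_top" and "(w \<longlongrightarrow> k0) at_bot"
    and "(w1 \<longlongrightarrow> 0) at_top" and "(w1 \<longlongrightarrow> 0) at_bot"
    and "kstar \<noteq> 0" and "kstar \<noteq> k0" and "kstar \<noteq> - k0"
    and "rho > 0"
    and "solves_schr (potU w w1 k0) kstar psil psil1 psil2"
    and "solves_schr (potU w w1 k0) kstar psic psic1 psic2"
    and "asymp_exp psil psil1 ap kstar at_top"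
    and "asymp_exp psil psil1 am (- kstar) at_bot"
    and "asymp_exp psic psic1 cp (- kstar) at_top"
    and "asymp_exp psic psic1 cm kstar at_bot"
    and "norm ap = rho" and "norm am = rho" and "norm cp = rho" and "norm cm = rho"
  shows "\<forall>x::real. (norm (psic x))\<^sup>2 + (norm (psil x))\<^sup>2
            + (k0 / kstar) * ((norm (psil x))\<^sup>2 - (norm (psic x))\<^sup>2) = 2 * rho\<^sup>2"
proof
  fix x
  have w: "\<And>x. (w has_real_derivative w1 x) (at x)"
    using assms(1) by (simp add: C2_real_def)
  have las: "(kstar\<^sup>2 - k0\<^sup>2) * (norm (psil x))\<^sup>2 + (norm (dressed_deriv w psil psil1 x))\<^sup>2
      = (kstar\<^sup>2 - k0\<^sup>2 + (kstar - k0)\<^sup>2) * rho\<^sup>2"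
    using solution_energy_eq_limit[OF w assms(10,12,2)] assms(16) by simp
  have cpa: "(kstar\<^sup>2 - k0\<^sup>2) * (norm (psic x))\<^sup>2 + (norm (dressed_deriv w psic psic1 x))\<^sup>2
      = (kstar\<^sup>2 - k0\<^sup>2 + (kstar + k0)\<^sup>2) * rho\<^sup>2"
    using solution_energy_eq_limit[OF w assms(11,14,2), of x] assms(18)
    by (simp add: power2_eq_square algebra_simps)
  have cross: "(kstar\<^sup>2 - k0\<^sup>2)\<^sup>2 * (norm (psic x))\<^sup>2 * (norm (psil x))\<^sup>2
      = (norm (dressed_deriv w psic psic1 x))\<^sup>2 * (norm (dressed_deriv w psil psil1 x))\<^sup>2"
    by (rule solutions_cross_norm_eq[OF w assms(11,10,14,12,2)])
      (simp_all add: algebra_simps power2_eq_square)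
  show "(norm (psic x))\<^sup>2 + (norm (psil x))\<^sup>2
      + (k0 / kstar) * ((norm (psil x))\<^sup>2 - (norm (psic x))\<^sup>2) = 2 * rho\<^sup>2"
    using weighted_norm_identity[OF assms(6-8) _ las cpa cross] assms(9) by simp
qed

end
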